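(* Let $T>0$, let $H_C:\mathbb R\to\mathbb C^{N\times N}$ be a continuous family of self-adjoint matrices, let $Q=Q^*\in\mathbb C^{N\times N}$ with $Q\neq0$, and suppose the decoupling condition $\int_0^T U_C(\tau,0)\,Q\,U_C(\tau,0)^*\,d\tau = 0$ holds. Then $$\int_0^T\|H_C(t)\|\,dt \ \ge\ \frac12.$$
   Context: $U_C(t,s)$ is the unitary propagator on $\mathbb C^N$ solving $\partial_tU_C(t,s)=-iH_C(t)U_C(t,s)$, $\partial_sU_C(t,s)=iU_C(t,s)H_C(s)$, $U_C(s,s)=\mathbf 1$; $\|\cdot\|$ is the operator norm on $\mathbb C^N$. *)

theory Defs
  imports "HOL-Analysis.Analysis"
begin

definition adjoint_mat :: "complex^'n^'n \<Rightarrow> complex^'n^'n" where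
  "adjoint_mat A = (\<chi> i j. cnj (A $ j $ i))"

definition op_norm :: "complex^'n^'n \<Rightarrow> real" where
  "op_norm A = onorm (\<lambda>x. A *v x)"

end

theory Submission
  imports Defs
begin

text \<open>Conjugating Q by the propagator gives W t = U t Q U t*, with W 0 = Q and
  W' = -i [H, W]. Since U t is unitary, the operator norm of W t equals that of Q, so
  |W'| \<le> 2 |H| |Q| and W t stays within 2 |Q| \<integral>|H| of Q. As W averages to zero over
  [0, T], Q itself must be within that distance of 0, i.e. |Q| \<le> 2 |Q| \<integral>|H|.
  To stay with scalar calculus, W is tested against fixed vectors: g t = \<langle>Q b, W t b\<rangle>.\<close>

type_synonym 'n cmat = "complex^'n^'n"

lemma bounded_bilinear_matrix_matrix_mult:
  "bounded_bilinear ((**) :: 'n::finite cmat \<Rightarrow> 'n cmat \<Rightarrow> 'n cmat)"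
  unfolding bilinear_conv_bounded_bilinear[symmetric] bilinear_def
  by (auto simp: linear_iff vec_eq_iff matrix_matrix_mult_def sum_distrib_left
      algebra_simps sum.distrib scaleR_sum_right)

lemma bounded_bilinear_matrix_vector_mult:
  "bounded_bilinear ((*v) :: 'n::finite cmat \<Rightarrow> complex^'n \<Rightarrow> complex^'n)"
  unfolding bilinear_conv_bounded_bilinear[symmetric] bilinear_def
  by (auto simp: linear_iff vec_eq_iff matrix_vector_mult_def sum_distrib_left
      algebra_simps sum.distrib scaleR_sum_right)

lemma bounded_linear_adjoint_mat: "bounded_linear (adjoint_mat :: 'n::finite cmat \<Rightarrow> 'n cmat)"
  unfolding linear_conv_bounded_linear[symmetric]
  by (auto simp: linear_iff vec_eq_iff adjoint_mat_def)

lemma adjoint_mat_mult: "adjoint_mat (A ** B) = adjoint_mat B ** adjoint_mat (A::'n::finite cmat)"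
  by (auto simp: vec_eq_iff adjoint_mat_def matrix_matrix_mult_def mult.commute)

lemma adjoint_mat_mat [simp]: "adjoint_mat (mat c :: 'n::finite cmat) = mat (cnj c)"
  by (auto simp: vec_eq_iff adjoint_mat_def mat_def)

lemma adjoint_mat_adjoint_mat [simp]: "adjoint_mat (adjoint_mat A) = (A::'n::finite cmat)"
  by (auto simp: vec_eq_iff adjoint_mat_def)

lemma inner_complex_eq_Re_cnj_mult: "inner (x::complex) y = Re (cnj x * y)"
  by (simp add: inner_complex_def)

lemma inner_matrix_vector_mult_adjoint:
  "inner ((A::'n::finite cmat) *v x) y = inner x (adjoint_mat A *v y)"
proof -
  have "inner (A *v x) y = Re (\<Sum>i\<in>UNIV. \<Sum>j\<in>UNIV. cnj (A$i$j) * cnj (x$j) * y$i)"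
    by (simp add: inner_vec_def inner_complex_eq_Re_cnj_mult matrix_vector_mult_def sum_distrib_right Re_sum)
  also have "\<dots> = Re (\<Sum>j\<in>UNIV. \<Sum>i\<in>UNIV. cnj (A$i$j) * cnj (x$j) * y$i)"
    by (subst sum.swap) simp
  also have "\<dots> = inner x (adjoint_mat A *v y)"
    by (simp add: inner_vec_def inner_complex_eq_Re_cnj_mult matrix_vector_mult_def sum_distrib_left Re_sum
        adjoint_mat_def algebra_simps)
  finally show ?thesis .
qed

lemma mat_commute: "A ** mat c = mat c ** (A::'n::finite cmat)"
  by (auto simp: vec_eq_iff matrix_matrix_mult_def mat_def if_distrib if_distribR mult.commute cong del: if_weak_cong)

lemma mat_uminus_mult: "mat (-c) ** (A::'n::finite cmat) = - (mat c ** A)"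
  by (auto simp: vec_eq_iff matrix_matrix_mult_def mat_def if_distrib if_distribR cong del: if_weak_cong)

lemma norm_mat_unimodular_mult: "cmod c = 1 \<Longrightarrow> norm (mat c *v (x::complex^'n::finite)) = norm x"
  by (simp add: norm_vec_def matrix_vector_mult_def mat_def norm_mult if_distrib if_distribR cong del: if_weak_cong)

definition unitary_mat :: "'n::finite cmat \<Rightarrow> bool" where
  "unitary_mat A \<longleftrightarrow> adjoint_mat A ** A = mat 1"

lemma unitary_mat_mult_adjoint: "unitary_mat A \<Longrightarrow> A ** adjoint_mat A = mat 1"
  unfolding unitary_mat_def using matrix_left_right_inverse by blast

lemma unitary_mat_adjoint: "unitary_mat A \<Longrightarrow> unitary_mat (adjoint_mat A)"
  by (simp add: unitary_mat_def unitary_mat_mult_adjoint)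

lemma norm_unitary_mat_mult:
  assumes "unitary_mat A"
  shows "norm (A *v x) = norm x"
proof -
  have "inner (A *v x) (A *v x) = inner x x"
    using assms by (simp add: inner_matrix_vector_mult_adjoint matrix_vector_mul_assoc unitary_mat_def)
  then show ?thesis by (simp add: norm_eq_sqrt_inner)
qed

lemma norm_matrix_vector_mult_le_op_norm: "norm ((A::'n::finite cmat) *v x) \<le> op_norm A * norm x"
  unfolding op_norm_def by (rule onorm[OF matrix_vector_mul_bounded_linear])

lemma op_norm_nonneg: "0 \<le> op_norm (A::'n::finite cmat)"
  unfolding op_norm_def by (rule onorm_pos_le[OF matrix_vector_mul_bounded_linear])

lemma op_norm_pos: "(A::'n::finite cmat) \<noteq> 0 \<Longrightarrow> 0 < op_norm A"
  unfolding op_norm_def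
  using onorm_pos_lt[OF matrix_vector_mul_bounded_linear] matrix_eq[of A 0] by auto

lemma op_norm_triangle: "op_norm ((A::'n::finite cmat) + B) \<le> op_norm A + op_norm B"
  unfolding op_norm_def matrix_vector_mult_add_rdistrib by (rule onorm_triangle) auto

lemma continuous_on_op_norm: "continuous_on S (op_norm :: 'n::finite cmat \<Rightarrow> real)"
proof -
  obtain K where K: "K > 0" "\<And>A x. norm ((A::'n cmat) *v x) \<le> norm A * norm x * K"
    using bounded_bilinear.pos_bounded[OF bounded_bilinear_matrix_vector_mult] by blast
  have le: "op_norm A \<le> K * norm A" for A :: "'n cmat"
    unfolding op_norm_def by (rule onorm_le) (use K in \<open>simp add: mult_ac\<close>)
  have "op_norm A - op_norm B \<le> K * dist A B" for A B :: "'n cmat"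
    using op_norm_triangle[of "A - B" B] le[of "A - B"] by (simp add: dist_norm)
  then have "dist (op_norm A) (op_norm B) \<le> K * dist A B" for A B :: "'n cmat"
    by (metis abs_le_iff dist_commute dist_real_def minus_diff_eq)
  then have "K-lipschitz_on S (op_norm :: 'n cmat \<Rightarrow> real)"
    using K(1) by (intro lipschitz_onI) auto
  then show ?thesis by (rule lipschitz_on_continuous_on)
qed

lemma op_norm_unitary_conj_le:
  assumes "unitary_mat U"
  shows "op_norm (U ** Q ** adjoint_mat U) \<le> op_norm Q"
  unfolding op_norm_def
proof (rule onorm_le)
  fix x
  have "norm ((U ** Q ** adjoint_mat U) *v x) = norm (Q *v (adjoint_mat U *v x))"
    using assms by (simp add: matrix_vector_mul_assoc[symmetric] norm_unitary_mat_mult)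
  also have "\<dots> \<le> op_norm Q * norm x"
    using norm_matrix_vector_mult_le_op_norm[of Q "adjoint_mat U *v x"] assms
    by (simp add: norm_unitary_mat_mult unitary_mat_adjoint)
  finally show "norm ((U ** Q ** adjoint_mat U) *v x) \<le> onorm ((*v) Q) * norm x"
    by (simp add: op_norm_def)
qed

lemma norm_commutator_mult_le:
  "norm ((A ** B - B ** A) *v x) \<le> 2 * op_norm A * op_norm (B::'n::finite cmat) * norm x"
proof -
  have "norm (A *v (B *v x)) \<le> op_norm A * (op_norm B * norm x)"
    using norm_matrix_vector_mult_le_op_norm[of A] norm_matrix_vector_mult_le_op_norm[of B]
      op_norm_nonneg[of A] by (meson mult_left_mono order_trans)
  moreover have "norm (B *v (A *v x)) \<le> op_norm B * (op_norm A * norm x)"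
    using norm_matrix_vector_mult_le_op_norm[of A] norm_matrix_vector_mult_le_op_norm[of B]
      op_norm_nonneg[of B] by (meson mult_left_mono order_trans)
  ultimately show ?thesis
    using norm_triangle_ineq4[of "A *v (B *v x)" "B *v (A *v x)"]
    by (simp add: matrix_vector_mult_diff_rdistrib matrix_vector_mul_assoc[symmetric] algebra_simps)
qed

lemma has_vector_derivative_adjoint_propagator:
  assumes "(U has_vector_derivative (mat (-\<i>) ** H ** U t)) (at t)"
    and "adjoint_mat H = H"
  shows "((\<lambda>t. adjoint_mat (U t)) has_vector_derivative (adjoint_mat (U t) ** H ** mat \<i>)) (at t)"
proof -
  have "((\<lambda>t. adjoint_mat (U t)) has_vector_derivative adjoint_mat (mat (-\<i>) ** H ** U t)) (at t)"
    by (rule bounded_linear.has_vector_derivative[OF bounded_linear_adjoint_mat assms(1)])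
  then show ?thesis
    by (simp add: adjoint_mat_mult assms(2) matrix_mul_assoc)
qed

lemma unitary_mat_propagator:
  fixes U :: "real \<Rightarrow> 'n::finite cmat"
  assumes dU: "\<And>t. (U has_vector_derivative (mat (-\<i>) ** H t ** U t)) (at t)"
    and "\<And>t. adjoint_mat (H t) = H t"
    and "unitary_mat (U 0)"
  shows "unitary_mat (U t)"
proof -
  have "((\<lambda>t. adjoint_mat (U t) ** U t) has_vector_derivative 0) (at t)" for t
  proof -
    have "((\<lambda>t. adjoint_mat (U t) ** U t) has_vector_derivative
        adjoint_mat (U t) ** (mat (-\<i>) ** H t ** U t) + (adjoint_mat (U t) ** H t ** mat \<i>) ** U t) (at t)"
      using bounded_bilinear.has_vector_derivative[OF bounded_bilinear_matrix_matrix_mult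
          has_vector_derivative_adjoint_propagator[OF dU assms(2)] dU] .
    moreover have "adjoint_mat (U t) ** (mat (-\<i>) ** H t ** U t) + (adjoint_mat (U t) ** H t ** mat \<i>) ** U t = 0"
      by (metis (no_types) ab_left_minus mat_commute mat_uminus_mult matrix_mul_assoc)
    ultimately show ?thesis by simp
  qed
  then obtain c where "\<And>t. adjoint_mat (U t) ** U t = c"
    using has_derivative_zero_constant[of UNIV "\<lambda>t. adjoint_mat (U t) ** U t"]
    unfolding has_vector_derivative_def by auto
  then show ?thesis
    using assms(3) unfolding unitary_mat_def by metis
qed

lemma has_vector_derivative_conjugate_propagator:
  fixes U :: "real \<Rightarrow> 'n::finite cmat" and Q :: "'n cmat"
  assumes dU: "(U has_vector_derivative (mat (-\<i>) ** H ** U t)) (at t)"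
    and "adjoint_mat H = H"
  defines "W \<equiv> \<lambda>t. U t ** Q ** adjoint_mat (U t)"
  shows "(W has_vector_derivative mat (-\<i>) ** (H ** W t - W t ** H)) (at t)"
proof -
  have "(W has_vector_derivative
      U t ** Q ** (adjoint_mat (U t) ** H ** mat \<i>) + (mat (-\<i>) ** H ** U t) ** Q ** adjoint_mat (U t)) (at t)"
    unfolding W_def
    using bounded_bilinear.has_vector_derivative[OF bounded_bilinear_matrix_matrix_mult,
        OF bounded_bilinear.has_vector_derivative[OF bounded_bilinear_matrix_matrix_mult,
          OF dU has_vector_derivative_const]
        has_vector_derivative_adjoint_propagator[OF dU assms(2)]]
    by (simp add: bounded_bilinear.zero_right[OF bounded_bilinear_matrix_matrix_mult])
  moreover have "U t ** Q ** (adjoint_mat (U t) ** H ** mat \<i>) + (mat (-\<i>) ** H ** U t) ** Q ** adjoint_mat (U t)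
      = mat (-\<i>) ** (H ** W t - W t ** H)"
    unfolding W_def
    by (simp add: bounded_bilinear.diff_right[OF bounded_bilinear_matrix_matrix_mult]
        bounded_bilinear.minus_left[OF bounded_bilinear_matrix_matrix_mult]
        mat_uminus_mult mat_commute matrix_mul_assoc)
  ultimately show ?thesis by simp
qed

lemma le_integral_of_has_integral_zero:
  fixes g g' h :: "real \<Rightarrow> real"
  assumes "0 < T"
    and g_int: "(g has_integral 0) {0..T}"
    and g_deriv: "\<And>t. t \<in> {0..T} \<Longrightarrow> (g has_vector_derivative g' t) (at t within {0..T})"
    and g'_le: "\<And>t. t \<in> {0..T} \<Longrightarrow> \<bar>g' t\<bar> \<le> h t"
    and "continuous_on {0..T} h"
  shows "g 0 \<le> integral {0..T} h"
proof -
  have h_int: "h integrable_on {0..t}" if "t \<le> T" for t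
    using that \<open>continuous_on {0..T} h\<close>
    by (intro integrable_continuous_real) (auto elim: continuous_on_subset)
  have lower: "g 0 - integral {0..T} h \<le> g t" if t: "t \<in> {0..T}" for t
  proof -
    have ftc: "(g' has_integral (g t - g 0)) {0..t}"
      using t by (intro fundamental_theorem_of_calculus)
        (auto intro: has_vector_derivative_within_subset[OF g_deriv])
    have "- integral {0..t} h = integral {0..t} (\<lambda>s. - h s)"
      by simp
    also have "\<dots> \<le> g t - g 0"
    proof (rule has_integral_le[OF integrable_integral ftc])
      show "(\<lambda>s. - h s) integrable_on {0..t}"
        using h_int[of t] t by (simp add: integrable_neg)
      show "- h s \<le> g' s" if "s \<in> {0..t}" for s
        using that t g'_le[of s] by (simp add: abs_le_iff)
    qed
    finally have "- integral {0..t} h \<le> g t - g 0" .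
    moreover have "integral {0..t} h \<le> integral {0..T} h"
      using t g'_le h_int by (intro integral_subset_le) (auto intro: order_trans[OF abs_ge_zero g'_le])
    ultimately show ?thesis by linarith
  qed
  have "((\<lambda>t. g 0 - integral {0..T} h) has_integral T * (g 0 - integral {0..T} h)) {0..T}"
    using has_integral_const_real[of "g 0 - integral {0..T} h" 0 T] \<open>0 < T\<close> by simp
  from has_integral_le[OF this g_int] lower have "T * (g 0 - integral {0..T} h) \<le> 0"
    by blast
  then show ?thesis
    using \<open>0 < T\<close> by (simp add: mult_le_0_iff)
qed

lemma norm_mult_le_of_decoupling:
  fixes U H :: "real \<Rightarrow> 'n::finite cmat" and Q :: "'n cmat"
  assumes "0 < T"
    and "continuous_on {0..T} H"
    and dU: "\<And>t. (U has_vector_derivative (mat (-\<i>) ** H t ** U t)) (at t)"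
    and H_adj: "\<And>t. adjoint_mat (H t) = H t"
    and "U 0 = mat 1"
    and decoupling: "((\<lambda>t. U t ** Q ** adjoint_mat (U t)) has_integral 0) {0..T}"
  shows "norm (Q *v b) \<le> 2 * op_norm Q * integral {0..T} (\<lambda>t. op_norm (H t)) * norm b"
proof -
  define W where "W t = U t ** Q ** adjoint_mat (U t)" for t
  define a where "a = Q *v b"
  define c where "c = 2 * norm a * norm b * op_norm Q"
  define g where "g t = inner a (W t *v b)" for t
  define g' where "g' t = inner a ((mat (-\<i>) ** (H t ** W t - W t ** H t)) *v b)" for t
  have "unitary_mat (U t)" for t
    by (rule unitary_mat_propagator[OF dU H_adj]) (simp add: \<open>U 0 = mat 1\<close> unitary_mat_def)
  then have op_norm_W: "op_norm (W t) \<le> op_norm Q" for t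
    unfolding W_def by (rule op_norm_unitary_conj_le)
  have H_norm_cont: "continuous_on {0..T} (\<lambda>t. op_norm (H t))"
    by (rule continuous_on_compose2[OF continuous_on_op_norm \<open>continuous_on {0..T} H\<close>]) auto
  have "0 \<le> integral {0..T} (\<lambda>t. op_norm (H t))"
    using H_norm_cont by (intro integral_nonneg integrable_continuous_real op_norm_nonneg)
  have lin: "bounded_linear (\<lambda>M::'n cmat. inner a (M *v b))"
    by (rule bounded_linear_compose[OF bounded_linear_inner_right
          bounded_bilinear.bounded_linear_left[OF bounded_bilinear_matrix_vector_mult]])
  have "(g has_vector_derivative g' t) (at t)" for t
    unfolding g_def g'_def W_def
    by (rule bounded_linear.has_vector_derivative[OF lin
          has_vector_derivative_conjugate_propagator[OF dU H_adj]])
  moreover have "\<bar>g' t\<bar> \<le> c * op_norm (H t)" for t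
  proof -
    have "\<bar>g' t\<bar> \<le> norm a * norm ((H t ** W t - W t ** H t) *v b)"
      unfolding g'_def
      using Cauchy_Schwarz_ineq2[of a "mat (-\<i>) *v ((H t ** W t - W t ** H t) *v b)"]
      by (simp add: matrix_vector_mul_assoc[symmetric] norm_mat_unimodular_mult)
    also have "\<dots> \<le> norm a * (2 * op_norm (H t) * op_norm Q * norm b)"
    proof (intro mult_left_mono)
      have "2 * op_norm (H t) * op_norm (W t) \<le> 2 * op_norm (H t) * op_norm Q"
        using op_norm_W[of t] op_norm_nonneg[of "H t"] by (simp add: mult_left_mono)
      then show "norm ((H t ** W t - W t ** H t) *v b) \<le> 2 * op_norm (H t) * op_norm Q * norm b"
        using norm_commutator_mult_le[of "H t" "W t" b] by (meson mult_right_mono norm_ge_zero order_trans)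
    qed simp
    finally show ?thesis
      by (simp add: c_def mult_ac)
  qed
  moreover have "(g has_integral 0) {0..T}"
    using has_integral_linear[OF decoupling lin] by (simp add: g_def[abs_def] W_def o_def)
  moreover have "continuous_on {0..T} (\<lambda>t. c * op_norm (H t))"
    using continuous_on_mult_left[OF H_norm_cont] .
  ultimately have "g 0 \<le> integral {0..T} (\<lambda>t. c * op_norm (H t))"
    using \<open>0 < T\<close> by (intro le_integral_of_has_integral_zero) (auto intro: has_vector_derivative_at_within)
  moreover have "g 0 = norm a * norm a"
    by (simp add: g_def W_def \<open>U 0 = mat 1\<close> a_def norm_eq_sqrt_inner)
  ultimately have "norm a * norm a \<le> norm a * (2 * op_norm Q * integral {0..T} (\<lambda>t. op_norm (H t)) * norm b)"
    by (simp add: c_def mult_ac)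
  then show ?thesis
    using op_norm_nonneg[of Q] \<open>0 \<le> integral {0..T} (\<lambda>t. op_norm (H t))\<close>
    by (cases "a = 0") (auto simp: a_def)
qed

theorem mainTheorem4:
  fixes T :: real
    and H :: "real \<Rightarrow> complex^'n^'n"
    and U :: "real \<Rightarrow> real \<Rightarrow> complex^'n^'n"
    and Q :: "complex^'n^'n"
  assumes "T > 0"
    and "continuous_on UNIV H"
    and "\<And>t. adjoint_mat (H t) = H t"
    and "\<And>t s. ((\<lambda>t'. U t' s) has_vector_derivative (mat (-\<i>) ** H t ** U t s)) (at t)"
    and "\<And>t s. ((\<lambda>s'. U t s') has_vector_derivative (mat \<i> ** U t s ** H s)) (at s)"
    and "\<And>s. U s s = mat 1"
    and "adjoint_mat Q = Q"
    and "Q \<noteq> 0"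
    and "((\<lambda>\<tau>. U \<tau> 0 ** Q ** adjoint_mat (U \<tau> 0)) has_integral 0) {0..T}"
  shows "integral {0..T} (\<lambda>t. op_norm (H t)) \<ge> 1/2"
proof -
  let ?I = "integral {0..T} (\<lambda>t. op_norm (H t))"
  have "norm (Q *v b) \<le> 2 * op_norm Q * ?I * norm b" for b
    using assms(1,3,4,6,9) continuous_on_subset[OF assms(2)]
    by (intro norm_mult_le_of_decoupling[where U = "\<lambda>t. U t 0"]) auto
  then have "op_norm Q \<le> 2 * op_norm Q * ?I"
    unfolding op_norm_def by (rule onorm_le)
  then show ?thesis
    using op_norm_pos[OF assms(8)] by simp
qed

end
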